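(* Assume (A1), (A2), (A3). Then for all $x,v\in\mathbb R^d$ and every probability measure $\mu$ on $\mathbb R^d$ with finite first moment, \[H(x,v)\ge24U(x)+\lambda|x|^2+12\Big|v+\frac x2\Big|^2,\] \[\mathcal L_\mu H(x,v)\le B+L_W(6+8\lambda)\Big(\int|y|\,d\mu(y)\Big)^2-\Big(\frac34\lambda+\lambda^2\Big)|x|^2-\gamma H(x,v),\] \[\mathcal L_\mu H(x,v)\le B+\Big(\Big(\int|y|\,d\mu(y)\Big)^2-|x|^2\Big)\Big(\frac34\lambda+\lambda^2\Big)-\gamma H(x,v).\] In particular $H$ is non-negative and tends to $+\infty$ at infinity.
   Context: $U,W\in\mathcal C^1(\mathbb R^d)$. (A1): $U\ge0$ and there exist $\lambda>0$, $A\ge0$ with $\tfrac12\nabla U(x)\cdot x\ge\lambda(U(x)+|x|^2/4)-A$ for all $x$. (A2): $\nabla U$ is $L_U$-Lipschitz. (A3): $W$ even, $\nabla W$ is $L_W$-Lipschitz, $L_W<\lambda/8$. Fix $\tilde A\ge0$ with $U(x)\ge\frac\lambda6|x|^2-\tilde A$ for all $x$ (such a constant exists). Set $\gamma=\frac{\lambda}{2(\lambda+1)}$, $B=24(A+(\lambda-\gamma)\tilde A+d)$, and \[H(x,v)=24U(x)+(6(1-\gamma)+\lambda)|x|^2+12x\cdot v+12|v|^2.\] For $\mu$ with finite first moment, $\mathcal L_\mu\phi(x,v)=v\cdot\nabla_x\phi-(v+\nabla U(x)+\nabla W*\mu(x))\cdot\nabla_v\phi+\Delta_v\phi$, where $\nabla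 W*\mu(x)=\int\nabla W(x-y)\mu(dy)$. *)

theory Defs
  imports "HOL-Probability.Probability"
begin

definition grad :: "('a::euclidean_space \<Rightarrow> real) \<Rightarrow> 'a \<Rightarrow> 'a" where
  "grad f x = (\<Sum>i\<in>Basis. frechet_derivative f (at x) i *\<^sub>R i)"

definition grad_x :: "('a::euclidean_space \<Rightarrow> 'a \<Rightarrow> real) \<Rightarrow> 'a \<Rightarrow> 'a \<Rightarrow> 'a" where
  "grad_x phi x v = grad (\<lambda>y. phi y v) x"

definition grad_v :: "('a::euclidean_space \<Rightarrow> 'a \<Rightarrow> real) \<Rightarrow> 'a \<Rightarrow> 'a \<Rightarrow> 'a" where
  "grad_v phi x v = grad (\<lambda>w. phi x w) v"

definition lap_v :: "('a::euclidean_space \<Rightarrow> 'a \<Rightarrow> real) \<Rightarrow> 'a \<Rightarrow> 'a \<Rightarrow> real" where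
  "lap_v phi x v = (\<Sum>i\<in>Basis.
      frechet_derivative (\<lambda>w. frechet_derivative (\<lambda>u. phi x u) (at w) i) (at v) i)"

definition conv_grad :: "('a::euclidean_space \<Rightarrow> real) \<Rightarrow> 'a measure \<Rightarrow> 'a \<Rightarrow> 'a" where
  "conv_grad W \<mu> x = (\<integral>y. grad W (x - y) \<partial>\<mu>)"

definition Lgen :: "('a::euclidean_space \<Rightarrow> real) \<Rightarrow> ('a \<Rightarrow> real) \<Rightarrow> 'a measure
    \<Rightarrow> ('a \<Rightarrow> 'a \<Rightarrow> real) \<Rightarrow> 'a \<Rightarrow> 'a \<Rightarrow> real" where
  "Lgen U W \<mu> phi x v =
     v \<bullet> grad_x phi x v - (v + grad U x + conv_grad W \<mu> x) \<bullet> grad_v phi x v + lap_v phi x v"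

definition gam :: "real \<Rightarrow> real" where
  "gam lam = lam / (2 * (lam + 1))"

definition Bconst :: "real \<Rightarrow> real \<Rightarrow> real \<Rightarrow> nat \<Rightarrow> real" where
  "Bconst lam A At d = 24 * (A + (lam - gam lam) * At + real d)"

definition Hfun :: "('a::euclidean_space \<Rightarrow> real) \<Rightarrow> real \<Rightarrow> 'a \<Rightarrow> 'a \<Rightarrow> real" where
  "Hfun U lam x v = 24 * U x + (6 * (1 - gam lam) + lam) * (norm x)\<^sup>2 + 12 * (x \<bullet> v)
     + 12 * (norm v)\<^sup>2"

end

theory Submission
  imports Defs
begin

(* Completing the square gives H = 24 U + lam |x|^2 + 12 |v + x/2|^2 + (3 - 6 gam) |x|^2 with
   gam <= 1/2, so H is nonnegative and grows quadratically. The generator acts explicitly on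
   H: with K = grad W * mu (x),
     L_mu H = (2 lam - 12 gam) x.v - 12 |v|^2 - 12 grad U(x).x - 12 K.x - 24 K.v + 24 d.
   As grad W is odd and L_W-Lipschitz, |K| <= L_W (|x| + int |y| dmu), and Young's inequality
   with L_W < lam/8 absorbs the K-terms. (A1) controls grad U(x).x, the quadratic lower bound
   on U absorbs the term -24 gam U coming from -gam H, and the identity lam = 2 gam (lam + 1)
   is what makes the |x|^2 coefficients close up. *)

lemma has_derivative_grad:
  fixes f :: "'a::euclidean_space \<Rightarrow> real"
  assumes "f differentiable (at x)"
  shows "(f has_derivative (\<lambda>h. grad f x \<bullet> h)) (at x)"
proof -
  let ?D = "frechet_derivative f (at x)"
  have D: "(f has_derivative ?D) (at x)"
    using assms frechet_derivative_works by blast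
  have "?D h = grad f x \<bullet> h" for h
  proof -
    have "?D h = (\<Sum>i\<in>Basis. (h \<bullet> i) * (?D i \<bullet> 1))"
      using Linear_Algebra.linear_componentwise[OF has_derivative_linear[OF D], of h 1] by simp
    also have "\<dots> = (\<Sum>i\<in>Basis. ?D i * (i \<bullet> h))"
      by (simp add: inner_commute mult.commute)
    also have "\<dots> = grad f x \<bullet> h"
      unfolding grad_def by (simp add: inner_sum_left)
    finally show ?thesis .
  qed
  then have "?D = (\<lambda>h. grad f x \<bullet> h)"
    by (rule ext)
  with D show ?thesis
    by simp
qed

lemma grad_eqI:
  fixes f :: "'a::euclidean_space \<Rightarrow> real"
  assumes "(f has_derivative (\<lambda>h. g \<bullet> h)) (at x)"
  shows "grad f x = g"
  using frechet_derivative_at[OF assms, symmetric] euclidean_representation[of g]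
  by (simp add: grad_def inner_commute)

lemma grad_uminus_even:
  fixes W :: "'a::euclidean_space \<Rightarrow> real"
  assumes "\<And>x. W differentiable (at x)" and "\<And>x. W (- x) = W x"
  shows "grad W (- x) = - grad W x"
proof -
  have "((\<lambda>y. W (- y)) has_derivative (\<lambda>h. grad W (- x) \<bullet> (- h))) (at x)"
    by (rule has_derivative_compose[OF has_derivative_minus[OF has_derivative_ident]
          has_derivative_grad[OF assms(1)]])
  then have "(W has_derivative (\<lambda>h. (- grad W (- x)) \<bullet> h)) (at x)"
    using assms(2) by simp
  then have "grad W x = - grad W (- x)"
    by (rule grad_eqI)
  then show ?thesis
    by simp
qed

lemma lipschitz_const_nonneg:
  fixes f :: "'a::euclidean_space \<Rightarrow> 'b::real_normed_vector"
  assumes "\<And>x y. norm (f x - f y) \<le> L * norm (x - y)"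
  shows "0 \<le> L"
proof -
  obtain e :: 'a where "e \<in> Basis"
    using nonempty_Basis by blast
  then have "norm e = 1"
    by simp
  moreover have "0 \<le> L * norm (e - 0)"
    using order_trans[OF norm_ge_zero assms[of e 0]] .
  ultimately show ?thesis
    by simp
qed

lemma norm_grad_le_even:
  fixes W :: "'a::euclidean_space \<Rightarrow> real"
  assumes "\<And>x. W differentiable (at x)" and "\<And>x. W (- x) = W x"
    and "\<And>x y. norm (grad W x - grad W y) \<le> L * norm (x - y)"
  shows "norm (grad W z) \<le> L * norm z"
proof -
  have "grad W 0 = - grad W 0"
    using grad_uminus_even[OF assms(1,2), of 0] by simp
  then have "(2::real) *\<^sub>R grad W 0 = 0"
    by (metis scaleR_2 add.right_inverse)
  then have "grad W 0 = 0"
    by simp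
  then show ?thesis
    using assms(3)[of z 0] by simp
qed

lemma norm_conv_grad_le:
  fixes W :: "'a::euclidean_space \<Rightarrow> real"
  assumes "\<And>x. W differentiable (at x)" and "\<And>x. W (- x) = W x"
    and "continuous_on UNIV (grad W)"
    and "\<And>x y. norm (grad W x - grad W y) \<le> L * norm (x - y)"
    and "prob_space \<mu>" and "sets \<mu> = sets borel" and "integrable \<mu> norm"
  shows "norm (conv_grad W \<mu> x) \<le> L * (norm x + (\<integral>y. norm y \<partial>\<mu>))"
proof -
  interpret prob_space \<mu> by fact
  have "0 \<le> L"
    using lipschitz_const_nonneg assms(4) by blast
  have bound: "norm (grad W (x - y)) \<le> L * (norm x + norm y)" for y
  proof -
    have "norm (grad W (x - y)) \<le> L * norm (x - y)"
      by (rule norm_grad_le_even[OF assms(1,2,4)])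
    also have "\<dots> \<le> L * (norm x + norm y)"
      using norm_triangle_ineq4 \<open>0 \<le> L\<close> by (rule mult_left_mono)
    finally show ?thesis .
  qed
  have "(\<lambda>y. grad W (x - y)) \<in> borel_measurable borel"
    by (rule borel_measurable_continuous_on[OF assms(3)]) simp
  then have "(\<lambda>y. norm (grad W (x - y))) \<in> borel_measurable \<mu>"
    by (simp add: measurable_cong_sets[OF assms(6) refl])
  moreover have bound_integrable: "integrable \<mu> (\<lambda>y. L * (norm x + norm y))"
    using assms(7) by simp
  ultimately have "integrable \<mu> (\<lambda>y. norm (grad W (x - y)))"
    by (intro Bochner_Integration.integrable_bound[OF bound_integrable])
      (auto intro!: AE_I2 order_trans[OF _ abs_ge_self] bound)
  then have "(\<integral>y. norm (grad W (x - y)) \<partial>\<mu>) \<le> (\<integral>y. L * (norm x + norm y) \<partial>\<mu>)"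
    using bound_integrable bound by (rule integral_mono)
  then have "norm (conv_grad W \<mu> x) \<le> (\<integral>y. L * (norm x + norm y) \<partial>\<mu>)"
    unfolding conv_grad_def by (rule order_trans[OF integral_norm_bound])
  also have "\<dots> = L * (norm x + (\<integral>y. norm y \<partial>\<mu>))"
    using assms(7) by (simp add: prob_space)
  finally show ?thesis .
qed

lemma has_derivative_Hfun_v:
  "((\<lambda>w. Hfun U lam x w) has_derivative (\<lambda>h. (12 *\<^sub>R x + 24 *\<^sub>R v) \<bullet> h)) (at v)"
  unfolding Hfun_def power2_norm_eq_inner
  apply (rule derivative_eq_intros | simp)+
  apply (simp add: algebra_simps inner_add_left inner_commute)
  done

lemma grad_v_Hfun: "grad_v (Hfun U lam) x v = 12 *\<^sub>R x + 24 *\<^sub>R v"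
  unfolding grad_v_def by (rule grad_eqI[OF has_derivative_Hfun_v])

lemma lap_v_Hfun:
  fixes U :: "'a::euclidean_space \<Rightarrow> real"
  shows "lap_v (Hfun U lam) x v = 24 * DIM('a)"
proof -
  have "frechet_derivative (\<lambda>w. (12 *\<^sub>R x + 24 *\<^sub>R w) \<bullet> i) (at v) = (\<lambda>h. 24 * (h \<bullet> i))"
    for i :: 'a
    by (rule frechet_derivative_at[symmetric]) (rule derivative_eq_intros | simp)+
  then show ?thesis
    unfolding lap_v_def frechet_derivative_at[OF has_derivative_Hfun_v, symmetric] by simp
qed

lemma grad_x_Hfun:
  fixes U :: "'a::euclidean_space \<Rightarrow> real"
  assumes "U differentiable (at x)"
  shows "grad_x (Hfun U lam) x v
    = 24 *\<^sub>R grad U x + (2 * (6 * (1 - gam lam) + lam)) *\<^sub>R x + 12 *\<^sub>R v"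
  unfolding grad_x_def Hfun_def power2_norm_eq_inner
  apply (rule grad_eqI)
  apply (rule derivative_eq_intros has_derivative_grad[OF assms] | simp)+
  apply (simp add: algebra_simps inner_add_left inner_commute)
  done

lemma Lgen_Hfun:
  fixes U :: "'a::euclidean_space \<Rightarrow> real"
  assumes "U differentiable (at x)"
  shows "Lgen U W \<mu> (Hfun U lam) x v
    = (2 * lam - 12 * gam lam) * (x \<bullet> v) - 12 * (norm v)\<^sup>2 - 12 * (grad U x \<bullet> x)
      - 12 * (conv_grad W \<mu> x \<bullet> x) - 24 * (conv_grad W \<mu> x \<bullet> v) + 24 * DIM('a)"
  unfolding Lgen_def grad_x_Hfun[OF assms] grad_v_Hfun lap_v_Hfun
  by (simp add: inner_diff_left inner_diff_right inner_commute algebra_simps power2_norm_eq_inner)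

lemma gam_bounds:
  assumes "0 < lam"
  shows "0 < gam lam" "gam lam \<le> 1/2" "gam lam \<le> lam" "lam = 2 * gam lam * (lam + 1)"
  using assms by (auto simp: gam_def field_simps)

lemma Hfun_ge:
  assumes "0 < lam"
  shows "24 * U x + lam * (norm x)\<^sup>2 + 12 * (norm (v + x /\<^sub>R 2))\<^sup>2 \<le> Hfun U lam x v"
proof -
  have "(norm (v + x /\<^sub>R 2))\<^sup>2 = (norm v)\<^sup>2 + x \<bullet> v + (norm x)\<^sup>2 / 4"
    by (simp add: power2_norm_eq_inner inner_add_left inner_add_right inner_commute algebra_simps)
  moreover have "0 \<le> (3 - 6 * gam lam) * (norm x)\<^sup>2"
    using gam_bounds(2)[OF assms] by simp
  ultimately show ?thesis
    unfolding Hfun_def by (simp add: algebra_simps)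
qed

lemma norm_sq_le_shift:
  fixes x v :: "'a::real_inner"
  shows "(norm v)\<^sup>2 \<le> 2 * (norm (v + x /\<^sub>R 2))\<^sup>2 + (norm x)\<^sup>2 / 2"
proof -
  have "2 * (norm (v + x /\<^sub>R 2))\<^sup>2 + (norm x)\<^sup>2 / 2 - (norm v)\<^sup>2 = (norm (v + x))\<^sup>2"
    by (simp add: power2_norm_eq_inner inner_add_left inner_add_right inner_commute algebra_simps)
  then show ?thesis
    by (metis diff_ge_0_iff_ge zero_le_power2)
qed

lemma Hfun_ge_norm_sq:
  assumes "0 < lam" and "\<And>x. 0 \<le> U x"
  shows "min (2 * lam / 3) 6 * (norm (x, v))\<^sup>2 \<le> Hfun U lam x v"
proof -
  let ?k = "min (2 * lam / 3) 6" and ?w = "v + x /\<^sub>R 2"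
  have "?k * (norm (x, v))\<^sup>2 \<le> ?k * (3/2 * (norm x)\<^sup>2 + 2 * (norm ?w)\<^sup>2)"
    using norm_sq_le_shift[of v x] assms(1)
    by (intro mult_left_mono) (auto simp: norm_Pair)
  also have "\<dots> = (?k * (3/2)) * (norm x)\<^sup>2 + (?k * 2) * (norm ?w)\<^sup>2"
    by (simp add: algebra_simps)
  also have "\<dots> \<le> lam * (norm x)\<^sup>2 + 12 * (norm ?w)\<^sup>2"
    by (intro add_mono mult_right_mono) auto
  also have "\<dots> \<le> Hfun U lam x v"
    using Hfun_ge[OF assms(1), of U x v] assms(2)[of x] by linarith
  finally show ?thesis .
qed

lemma filterlim_at_top_if_norm_sq_le:
  fixes f :: "'a::real_normed_vector \<Rightarrow> real"
  assumes "0 < k" and "\<And>z. k * (norm z)\<^sup>2 \<le> f z"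
  shows "filterlim f at_top at_infinity"
proof (rule filterlim_at_top_mono)
  have "filterlim (\<lambda>z. (norm z)\<^sup>2) at_top at_infinity"
    by (rule filterlim_pow_at_top[OF _ filterlim_norm_at_top]) simp
  then show "filterlim (\<lambda>z. k * (norm z)\<^sup>2) at_top at_infinity"
    by (rule filterlim_tendsto_pos_mult_at_top[OF tendsto_const assms(1)])
  show "\<forall>\<^sub>F z in at_infinity. k * (norm z)\<^sup>2 \<le> f z"
    using assms(2) by (intro always_eventually allI)
qed

lemma interaction_bound:
  fixes K x v :: "'a::real_inner" and L lam m :: real
  assumes L: "0 \<le> L" "8 * L \<le> lam" and "0 \<le> m"
    and K: "norm K \<le> L * (norm x + m)"
  shows "- 12 * (K \<bullet> x) - 24 * (K \<bullet> v) \<le> 9/4 * lam * (norm x)\<^sup>2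
      + 3 * lam * (norm x * norm v) + 9/4 * (norm v)\<^sup>2 + L * (6 + 8 * lam) * m\<^sup>2"
proof -
  have Kx: "- (K \<bullet> x) \<le> L * (norm x + m) * norm x"
    using norm_cauchy_schwarz[of "- K" x] mult_right_mono[OF K norm_ge_zero[of x]] by simp
  have Kv: "- (K \<bullet> v) \<le> L * (norm x + m) * norm v"
    using norm_cauchy_schwarz[of "- K" v] mult_right_mono[OF K norm_ge_zero[of v]] by simp
  have "12 * L * (norm x * m) \<le> 6 * L * (norm x)\<^sup>2 + 6 * L * m\<^sup>2"
    using mult_left_mono[OF zero_le_power2[of "norm x - m"] L(1)]
    by (simp add: algebra_simps power2_eq_square)
  moreover have "24 * L * (m * norm v) \<le> 8 * lam * L * m\<^sup>2 + 9/4 * (norm v)\<^sup>2"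
  proof -
    \<comment> \<open>\<open>lam \<ge> 8 * L\<close> turns the left side into a perfect square in \<open>8 * L * m\<close> and \<open>norm v\<close>\<close>
    have "64 * L * L * m\<^sup>2 \<le> 8 * lam * L * m\<^sup>2"
      using L by (intro mult_right_mono) (auto intro: mult_right_mono)
    then show ?thesis
      using zero_le_power2[of "8 * L * m - 3/2 * norm v"] by (simp add: algebra_simps power2_eq_square)
  qed
  moreover have "18 * L * (norm x)\<^sup>2 \<le> 9/4 * lam * (norm x)\<^sup>2"
    using L by (intro mult_right_mono) auto
  moreover have "24 * L * (norm x * norm v) \<le> 3 * lam * (norm x * norm v)"
    using L by (intro mult_right_mono) auto
  ultimately show ?thesis
    using Kx Kv by (simp add: algebra_simps power2_eq_square)
qed

lemma drift_bound:
  fixes lam a b p I GU U A At R d :: real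
  assumes lam: "0 < lam" and p: "p \<le> a * b"
    and I: "I \<le> 9/4 * lam * a\<^sup>2 + 3 * lam * (a * b) + 9/4 * b\<^sup>2 + R"
    and GU: "lam * (U + a\<^sup>2 / 4) - A \<le> 1/2 * GU"
    and U: "lam / 6 * a\<^sup>2 - At \<le> U"
  shows "(2 * lam - 12 * gam lam) * p - 12 * b\<^sup>2 - 12 * GU + I + 24 * d
    \<le> 24 * (A + (lam - gam lam) * At + d) + R - (3/4 * lam + lam\<^sup>2) * a\<^sup>2
       - gam lam * (24 * U + (6 * (1 - gam lam) + lam) * a\<^sup>2 + 12 * p + 12 * b\<^sup>2)"
    (is "?lhs \<le> ?rhs")
proof -
  define g where "g = gam lam"
  have g: "0 < g" "g \<le> 1/2" "g \<le> lam" "lam = 2 * g * (lam + 1)"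
    using gam_bounds[OF lam] unfolding g_def by auto
  \<comment> \<open>each summand is nonnegative by a hypothesis, by Young's inequality, or by the choice of \<open>g\<close>\<close>
  have "?rhs - ?lhs = (12 * GU - 24 * lam * U - 6 * lam * a\<^sup>2 + 24 * A)
      + 4 * ((lam - g) * (6 * U) - (lam - g) * (lam * a\<^sup>2 - 6 * At))
      + (9/4 * lam * a\<^sup>2 + 3 * lam * (a * b) + 9/4 * b\<^sup>2 + R - I)
      + 2 * (lam * (a * b) - lam * p)
      + 15/4 * (b - 2/3 * lam * a)\<^sup>2
      + 12 * (1/2 * b\<^sup>2 - g * b\<^sup>2)
      + (3 * lam * a\<^sup>2 - 5 * g * lam * a\<^sup>2 - 6 * g * a\<^sup>2)
      + 4/3 * lam\<^sup>2 * a\<^sup>2 + 6 * g\<^sup>2 * a\<^sup>2"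
    unfolding g_def by (simp add: algebra_simps power2_eq_square)
  moreover have "0 \<le> 12 * GU - 24 * lam * U - 6 * lam * a\<^sup>2 + 24 * A"
    using GU by (simp add: algebra_simps)
  moreover have "(lam - g) * (lam * a\<^sup>2 - 6 * At) \<le> (lam - g) * (6 * U)"
    using U g by (intro mult_left_mono) auto
  moreover have "0 \<le> 15/4 * (b - 2/3 * lam * a)\<^sup>2" "0 \<le> 4/3 * lam\<^sup>2 * a\<^sup>2" "0 \<le> 6 * g\<^sup>2 * a\<^sup>2"
    by simp_all
  moreover have "lam * p \<le> lam * (a * b)"
    using p lam by simp
  moreover have "g * b\<^sup>2 \<le> 1/2 * b\<^sup>2"
    using g by (intro mult_right_mono) auto
  moreover have "5 * g * lam * a\<^sup>2 + 6 * g * a\<^sup>2 \<le> 3 * lam * a\<^sup>2"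
  proof -
    have "3 * lam * a\<^sup>2 = 6 * g * lam * a\<^sup>2 + 6 * g * a\<^sup>2"
      by (subst g(4)) (simp add: algebra_simps)
    then show ?thesis
      using g by simp
  qed
  ultimately show ?thesis
    using I by (smt (z3))
qed

lemma Lgen_Hfun_le:
  fixes U W :: "'a::euclidean_space \<Rightarrow> real"
  assumes "0 < lam" and "U differentiable (at x)"
    and "lam * (U x + (norm x)\<^sup>2 / 4) - A \<le> 1/2 * (grad U x \<bullet> x)"
    and "lam / 6 * (norm x)\<^sup>2 - At \<le> U x"
    and "\<And>x. W differentiable (at x)" and "\<And>x. W (- x) = W x"
    and "continuous_on UNIV (grad W)"
    and "\<And>x y. norm (grad W x - grad W y) \<le> L * norm (x - y)" and "8 * L \<le> lam"
    and "prob_space \<mu>" and "sets \<mu> = sets borel" and "integrable \<mu> norm"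
  shows "Lgen U W \<mu> (Hfun U lam) x v \<le> Bconst lam A At DIM('a)
      + L * (6 + 8 * lam) * (\<integral>y. norm y \<partial>\<mu>)\<^sup>2
      - (3/4 * lam + lam\<^sup>2) * (norm x)\<^sup>2 - gam lam * Hfun U lam x v"
proof -
  let ?K = "conv_grad W \<mu> x" and ?m = "\<integral>y. norm y \<partial>\<mu>"
  have "0 \<le> L"
    using lipschitz_const_nonneg assms(8) by blast
  moreover have "0 \<le> ?m"
    by simp
  moreover have "norm ?K \<le> L * (norm x + ?m)"
    using norm_conv_grad_le[OF assms(5-8,10-12)] .
  ultimately have "- 12 * (?K \<bullet> x) - 24 * (?K \<bullet> v) \<le> 9/4 * lam * (norm x)\<^sup>2
      + 3 * lam * (norm x * norm v) + 9/4 * (norm v)\<^sup>2 + L * (6 + 8 * lam) * ?m\<^sup>2"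
    using assms(9) by (intro interaction_bound)
  from drift_bound[OF assms(1) norm_cauchy_schwarz this assms(3,4), of "DIM('a)"]
  show ?thesis
    unfolding Lgen_Hfun[OF assms(2)] Hfun_def Bconst_def by linarith
qed

theorem lemma2p1:
  fixes U W :: "'a::euclidean_space \<Rightarrow> real"
    and lam A At L_U L_W :: real
  assumes U_diff: "\<And>x. U differentiable (at x)"
    and U_C1: "continuous_on UNIV (grad U)"
    and W_diff: "\<And>x. W differentiable (at x)"
    and W_C1: "continuous_on UNIV (grad W)"
    and lam_pos: "lam > 0" and A_nonneg: "A \<ge> 0"
    and U_nonneg: "\<And>x. U x \<ge> 0"
    and A1: "\<And>x. (1/2) * (grad U x \<bullet> x) \<ge> lam * (U x + (norm x)\<^sup>2 / 4) - A"
    and A2: "\<And>x y. norm (grad U x - grad U y) \<le> L_U * norm (x - y)"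
    and W_even: "\<And>x. W (- x) = W x"
    and A3: "\<And>x y. norm (grad W x - grad W y) \<le> L_W * norm (x - y)"
    and LW_small: "L_W < lam / 8"
    and At_nonneg: "At \<ge> 0"
    and At_bound: "\<And>x. U x \<ge> lam / 6 * (norm x)\<^sup>2 - At"
  shows "(\<forall>(\<mu>::'a measure) x v. prob_space \<mu> \<and> sets \<mu> = sets borel \<and> integrable \<mu> norm \<longrightarrow>
            Hfun U lam x v \<ge> 24 * U x + lam * (norm x)\<^sup>2 + 12 * (norm (v + x /\<^sub>R 2))\<^sup>2
          \<and> Lgen U W \<mu> (Hfun U lam) x v \<le> Bconst lam A At DIM('a)
              + L_W * (6 + 8 * lam) * (\<integral>y. norm y \<partial>\<mu>)\<^sup>2
              - (3/4 * lam + lam\<^sup>2) * (norm x)\<^sup>2 - gam lam * Hfun U lam x v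
          \<and> Lgen U W \<mu> (Hfun U lam) x v \<le> Bconst lam A At DIM('a)
              + ((\<integral>y. norm y \<partial>\<mu>)\<^sup>2 - (norm x)\<^sup>2) * (3/4 * lam + lam\<^sup>2)
              - gam lam * Hfun U lam x v)
    \<and> (\<forall>x v. Hfun U lam x v \<ge> 0)
    \<and> filterlim (\<lambda>(x, v). Hfun U lam x v) at_top at_infinity"
proof -
  let ?k = "min (2 * lam / 3) 6"
  have "8 * L_W \<le> lam"
    using LW_small by simp
  note drift = Lgen_Hfun_le[OF lam_pos U_diff A1 At_bound W_diff W_even W_C1 A3 this]
  have "L_W * (6 + 8 * lam) \<le> 3/4 * lam + lam\<^sup>2"
    using mult_right_mono[of L_W "lam / 8" "6 + 8 * lam"] LW_small lam_pos
    by (simp add: algebra_simps power2_eq_square)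
  then have "L_W * (6 + 8 * lam) * m\<^sup>2 \<le> (3/4 * lam + lam\<^sup>2) * m\<^sup>2" for m :: real
    by (rule mult_right_mono) simp
  then have weaken: "L_W * (6 + 8 * lam) * m\<^sup>2 - (3/4 * lam + lam\<^sup>2) * (norm x)\<^sup>2
      \<le> (m\<^sup>2 - (norm x)\<^sup>2) * (3/4 * lam + lam\<^sup>2)" for m and x :: 'a
    by (simp add: left_diff_distrib mult.commute)
  have coercive: "?k * (norm z)\<^sup>2 \<le> (case z of (x, v) \<Rightarrow> Hfun U lam x v)" for z :: "'a \<times> 'a"
    using Hfun_ge_norm_sq[OF lam_pos U_nonneg] by (cases z) simp
  have "0 < ?k"
    using lam_pos by simp
  then have "0 \<le> Hfun U lam x v" for x v
    using order_trans[OF _ coercive[of "(x, v)"]] by simp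
  moreover have "filterlim (\<lambda>(x, v). Hfun U lam x v) at_top at_infinity"
    using filterlim_at_top_if_norm_sq_le[OF \<open>0 < ?k\<close> coercive] .
  ultimately show ?thesis
    using Hfun_ge[OF lam_pos] drift weaken by (smt (verit))
qed

end
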